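(* Let $f:\mathbb N\to\mathbb N$ be a function with $f(n)\to\infty$ as $n\to\infty$, and let $\Sigma$ be a finite alphabet with at least two letters. Then there is a right-infinite recurrent word $\mathbf w$ over $\Sigma$ such that $p_{\mathbf w}(n)\le n f(n)$ for all sufficiently large $n$, and such that $\mathbf w$ has infinitely many distinct primitive factors $y$ with the property that $y^n$ is a factor of $\mathbf w$ for every $n\ge 1$.
   Context: A factor of $\mathbf w$ is a finite block of contiguous symbols of $\mathbf w$; $p_{\mathbf w}(n)$ is the number of distinct factors of length $n$. A right-infinite word is recurrent if every factor occurs infinitely often in it. A nonempty word is primitive if it is not of the form $z^m$ with $m\ge 2$. *)

theory Defs
  imports Main
begin

definition occurs_at :: "(nat \<Rightarrow> 'a) \<Rightarrow> 'a list \<Rightarrow> nat \<Rightarrow> bool" where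
  "occurs_at w x i \<longleftrightarrow> x = map (\<lambda>k. w (i + k)) [0..<length x]"

definition is_factor :: "(nat \<Rightarrow> 'a) \<Rightarrow> 'a list \<Rightarrow> bool" where
  "is_factor w x \<longleftrightarrow> (\<exists>i. occurs_at w x i)"

definition factors_of_length :: "(nat \<Rightarrow> 'a) \<Rightarrow> nat \<Rightarrow> 'a list set" where
  "factors_of_length w n = {x. length x = n \<and> is_factor w x}"

definition complexity :: "(nat \<Rightarrow> 'a) \<Rightarrow> nat \<Rightarrow> nat" where
  "complexity w n = card (factors_of_length w n)"

definition recurrent :: "(nat \<Rightarrow> 'a) \<Rightarrow> bool" where
  "recurrent w \<longleftrightarrow> (\<forall>x. is_factor w x \<longrightarrow> infinite {i. occurs_at w x i})"

definition primitive :: "'a list \<Rightarrow> bool" where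
  "primitive y \<longleftrightarrow> y \<noteq> [] \<and> \<not> (\<exists>z m. m \<ge> 2 \<and> y = concat (replicate m z))"

end

theory Submission
  imports Defs "HOL-Library.Nat_Bijection" "HOL-Library.Infinite_Set"
begin

text \<open>
  The word is the limit of finite blocks \<open>w\<^sub>0 = []\<close> and
  \<open>w\<^sub>s\<^sub>+\<^sub>1 = w\<^sub>s (b w\<^sub>k)\<^sup>R\<^sup>+\<^sup>1 (a w\<^sub>k)\<^sup>R a w\<^sub>s\<close>, where \<open>(k, N) = prod_decode s\<close> and \<open>R\<close> is
  large. Each \<open>w\<^sub>s\<close> is a prefix and a suffix of every later block, which makes the limit
  recurrent. Every \<open>k\<close> is decoded at stages with \<open>R\<close> arbitrarily large, so all powers of
  \<open>w\<^sub>k b\<close> occur, and \<open>w\<^sub>k b\<close> is primitive since it contains one more \<open>b\<close> than \<open>a\<close>.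

  For the complexity, let \<open>\<sigma>\<close> be the first stage with \<open>|w\<^sub>\<sigma>| \<ge> n\<close>. All later blocks begin with
  the same \<open>P\<close> and end with the same \<open>Q\<close> of length \<open>n\<close>, so a factor of length \<open>n\<close> lies in
  \<open>w\<^sub>\<sigma>\<close> or in \<open>Q c P\<close> or in \<open>Q m P\<close> for a middle part \<open>m\<close> built from some \<open>w\<^sub>k\<close>, \<open>k < \<sigma>\<close>.
  Powers of a word of length \<open>p\<close> beyond exponent \<open>n/p + 2\<close> contribute no new factors of
  length \<open>n\<close>, so each of these \<open>\<sigma> + 2\<close> sources contributes \<open>O(n)\<close> factors. Finally \<open>R\<close> is
  chosen so large that \<open>f(n) \<ge> 10 (\<sigma> + 2)\<close> whenever \<open>\<sigma>\<close> is the first stage for \<open>n\<close>.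
\<close>

lemma add_le_div_add_2_mult:
  assumes "0 < (L::nat)"
  shows "n + L \<le> (n div L + 2) * L"
proof -
  have "L * (n div L) + n mod L = n"
    by (rule mult_div_mod_eq)
  moreover have "n mod L < L"
    using assms by simp
  ultimately have "n + L \<le> L * (n div L) + 2 * L"
    by linarith
  then show ?thesis
    by (simp add: algebra_simps)
qed

lemma div_add_2_mult_le:
  assumes "0 < (L::nat)" "L \<le> n"
  shows "(n div L + 2) * L \<le> 3 * n"
proof -
  have "L * (n div L) + n mod L = n"
    by (rule mult_div_mod_eq)
  then have "L * (n div L) + 2 * L \<le> 3 * n"
    using assms by linarith
  then show ?thesis
    by (simp add: algebra_simps)
qed

definition list_pow :: "'a list \<Rightarrow> nat \<Rightarrow> 'a list" where
  "list_pow x m = concat (replicate m x)"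

lemma list_pow_0 [simp]: "list_pow x 0 = []"
  by (simp add: list_pow_def)

lemma list_pow_Suc: "list_pow x (Suc m) = x @ list_pow x m"
  by (simp add: list_pow_def)

lemma list_pow_Suc_right: "list_pow x (Suc m) = list_pow x m @ x"
  by (simp add: list_pow_def replicate_append_same[symmetric])

lemma list_pow_add: "list_pow x (m + k) = list_pow x m @ list_pow x k"
  by (induction m) (auto simp: list_pow_Suc)

lemma list_pow_Cons_Suc: "list_pow (c # x) (Suc m) = c # list_pow (x @ [c]) m @ x"
  by (induction m) (auto simp: list_pow_Suc)

lemma length_list_pow [simp]: "length (list_pow x m) = m * length x"
  by (induction m) (auto simp: list_pow_Suc)

lemma set_list_pow_subset: "set (list_pow x m) \<subseteq> set x"
  by (induction m) (auto simp: list_pow_Suc)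

lemma count_list_pow: "count_list (list_pow x m) c = m * count_list x c"
  by (induction m) (auto simp: list_pow_Suc)

definition list_factors :: "nat \<Rightarrow> 'a list \<Rightarrow> 'a list set" where
  "list_factors n u = {take n (drop i u) | i. i + n \<le> length u}"

definition take_last :: "nat \<Rightarrow> 'a list \<Rightarrow> 'a list" where
  "take_last n u = drop (length u - n) u"

lemma take_last_append: "n \<le> length v \<Longrightarrow> take_last n (u @ v) = take_last n v"
  by (simp add: take_last_def)

lemma list_factors_subset_image: "list_factors n u \<subseteq> (\<lambda>i. take n (drop i u)) ` {..length u}"
  unfolding list_factors_def by auto

lemma finite_list_factors: "finite (list_factors n u)"
  using list_factors_subset_image by (rule finite_subset) simp

lemma card_list_factors_le: "card (list_factors n u) \<le> length u + 1"
proof -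
  have "card (list_factors n u) \<le> card ((\<lambda>i. take n (drop i u)) ` {..length u})"
    by (intro card_mono list_factors_subset_image) simp
  also have "\<dots> \<le> length u + 1"
    using card_image_le[of "{..length u}" "\<lambda>i. take n (drop i u)"] by simp
  finally show ?thesis .
qed

lemma take_drop_mem_list_factors_window:
  assumes "d \<le> i" "i + n \<le> d + m" "i + n \<le> length u"
  shows "take n (drop i u) \<in> list_factors n (take m (drop d u))"
proof -
  have "take n (drop (i - d) (take m (drop d u))) = take (min n (m - (i - d))) (drop (i - d + d) u)"
    by (simp only: drop_take take_take drop_drop)
  also have "\<dots> = take n (drop i u)"
    using assms by (simp add: min_absorb1)
  finally show ?thesis
    using assms unfolding list_factors_def by (intro CollectI exI[of _ "i - d"]) auto
qed

lemma list_factors_window_subset: "list_factors n (take m (drop d u)) \<subseteq> list_factors n u"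
proof
  fix x assume "x \<in> list_factors n (take m (drop d u))"
  then obtain i where x: "x = take n (drop i (take m (drop d u)))"
    and i: "i + n \<le> length (take m (drop d u))"
    unfolding list_factors_def by auto
  have "x = take (min n (m - i)) (drop (i + d) u)"
    using x by (simp only: drop_take take_take drop_drop)
  moreover have "min n (m - i) = n"
    using i by auto
  ultimately have "x = take n (drop (i + d) u)"
    by simp
  moreover have "i + d + n \<le> length u \<or> n = 0"
    using i by auto
  ultimately show "x \<in> list_factors n u"
    unfolding list_factors_def by force
qed

lemma list_factors_append3:
  "list_factors n (A @ G @ B)
     \<subseteq> list_factors n A \<union> list_factors n B \<union> list_factors n (take_last n A @ G @ take n B)"
proof
  let ?u = "A @ G @ B"
  fix x assume "x \<in> list_factors n ?u"
  then obtain i where x: "x = take n (drop i ?u)" and i: "i + n \<le> length ?u"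
    unfolding list_factors_def by auto
  consider "i + n \<le> length A" | "length A + length G \<le> i"
    | "length A < i + n" "i < length A + length G"
    by linarith
  then show "x \<in> list_factors n A \<union> list_factors n B \<union> list_factors n (take_last n A @ G @ take n B)"
  proof cases
    case 1
    then have "x \<in> list_factors n (take (length A) (drop 0 ?u))"
      using take_drop_mem_list_factors_window[of 0 i n "length A" ?u] i x by simp
    then show ?thesis by simp
  next
    case 2
    then have "x \<in> list_factors n (take (length B) (drop (length A + length G) ?u))"
      using take_drop_mem_list_factors_window[of "length A + length G" i n "length B" ?u] i x by simp
    then show ?thesis by simp
  next
    case 3
    let ?d = "length A - n"
    let ?m = "length A - ?d + length G + n"
    have "x \<in> list_factors n (take ?m (drop ?d ?u))"
      using take_drop_mem_list_factors_window[of ?d i n ?m ?u] 3 i x by simp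
    moreover have "take ?m (drop ?d ?u) = take_last n A @ G @ take n B"
      by (simp add: take_last_def)
    ultimately show ?thesis by simp
  qed
qed

text \<open>Once \<open>X\<^sup>R\<close> is longer than \<open>n + |X|\<close>, every factor of length \<open>n\<close> of \<open>U X\<^sup>R\<^sup>+\<^sup>1 V\<close> either ends
  before the last copy of \<open>X\<close> or can be shifted back by \<open>|X|\<close>.\<close>
lemma list_factors_pow_Suc_subset:
  assumes "n + length X \<le> R * length X"
  shows "list_factors n (U @ list_pow X (Suc R) @ V) \<subseteq> list_factors n (U @ list_pow X R @ V)"
proof
  fix x assume "x \<in> list_factors n (U @ list_pow X (Suc R) @ V)"
  then obtain i where x: "x = take n (drop i (U @ list_pow X (Suc R) @ V))"
    and i: "i + n \<le> length (U @ list_pow X (Suc R) @ V)"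
    unfolding list_factors_def by auto
  show "x \<in> list_factors n (U @ list_pow X R @ V)"
  proof (cases "i + n \<le> length U + R * length X")
    case True
    let ?l = "length U + R * length X"
    have prefix: "take ?l (drop 0 (U @ list_pow X (Suc R) @ V)) = take ?l (drop 0 (U @ list_pow X R @ V))"
      by (simp add: list_pow_Suc_right)
    have "x \<in> list_factors n (take ?l (drop 0 (U @ list_pow X (Suc R) @ V)))"
      using take_drop_mem_list_factors_window[of 0 i n ?l "U @ list_pow X (Suc R) @ V"] True i x
      by simp
    then show ?thesis
      unfolding prefix using list_factors_window_subset by blast
  next
    case False
    then have ge: "length U + length X \<le> i"
      using assms by linarith
    then have "drop i (U @ list_pow X (Suc R) @ V) = drop (i - length X) (U @ list_pow X R @ V)"
      by (simp add: list_pow_Suc add.commute)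
    then have "x = take n (drop (i - length X) (U @ list_pow X R @ V))"
      using x by simp
    moreover have "i - length X + n \<le> length (U @ list_pow X R @ V)"
      using i ge by simp
    ultimately show ?thesis
      unfolding list_factors_def by blast
  qed
qed

lemma list_factors_pow_min_subset:
  assumes "n + length X \<le> c * length X"
  shows "list_factors n (U @ list_pow X R @ V) \<subseteq> list_factors n (U @ list_pow X (min R c) @ V)"
proof (induction R)
  case 0
  then show ?case by simp
next
  case (Suc R)
  show ?case
  proof (cases "Suc R \<le> c")
    case True
    then show ?thesis by simp
  next
    case False
    then have "n + length X \<le> R * length X"
      using assms by (meson le_trans mult_le_mono1 not_less_eq_eq)
    then have "list_factors n (U @ list_pow X (Suc R) @ V) \<subseteq> list_factors n (U @ list_pow X R @ V)"
      by (rule list_factors_pow_Suc_subset)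
    also have "\<dots> \<subseteq> list_factors n (U @ list_pow X (min R c) @ V)"
      by (rule Suc.IH)
    finally show ?thesis
      using False by (simp add: min_absorb2)
  qed
qed

definition framed :: "nat \<Rightarrow> 'a list \<Rightarrow> 'a list \<Rightarrow> 'a list set \<Rightarrow> 'a list \<Rightarrow> bool" where
  "framed n P Q S u \<longleftrightarrow> n \<le> length u \<and> take n u = P \<and> take_last n u = Q \<and> list_factors n u \<subseteq> S"

lemma framed_append_Cons:
  assumes "framed n P Q S u" "framed n P Q S v" "list_factors n (Q @ [c] @ P) \<subseteq> S"
  shows "framed n P Q S (u @ c # v)"
proof -
  have u: "n \<le> length u" "take n u = P" "take_last n u = Q" "list_factors n u \<subseteq> S"
    using assms(1) unfolding framed_def by blast+
  have v: "n \<le> length v" "take n v = P" "take_last n v = Q" "list_factors n v \<subseteq> S"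
    using assms(2) unfolding framed_def by blast+
  have "list_factors n (u @ [c] @ v)
      \<subseteq> list_factors n u \<union> list_factors n v \<union> list_factors n (take_last n u @ [c] @ take n v)"
    by (rule list_factors_append3)
  then have "list_factors n (u @ c # v) \<subseteq> S"
    using u v assms(3) by auto
  moreover have "take_last n (u @ c # v) = Q"
    using v take_last_append[of n "c # v" "u"] take_last_append[of n v "[c]"] by simp
  ultimately show ?thesis
    using u unfolding framed_def by simp
qed

lemma framed_append_pow:
  assumes "framed n P Q S u" "framed n P Q S v" "list_factors n (Q @ [c] @ P) \<subseteq> S"
  shows "framed n P Q S (u @ list_pow (c # v) R)"
proof (induction R)
  case 0
  then show ?case using assms(1) by simp
next
  case (Suc R)
  then show ?case
    using framed_append_Cons[OF Suc assms(2,3)] by (simp add: list_pow_Suc_right)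
qed

lemma fst_prod_decode_le: "fst (prod_decode s) \<le> s"
  by (metis le_prod_encode_1 prod.collapse prod_decode_inverse)

context
  fixes f :: "nat \<Rightarrow> nat" and a b :: 'a
begin

definition threshold :: "nat \<Rightarrow> nat" where
  "threshold j = (LEAST N. \<forall>m\<ge>N. 10 * (j + 2) \<le> f m)"

lemma f_ge_of_threshold_le:
  assumes "filterlim f at_top at_top" "threshold j \<le> m"
  shows "10 * (j + 2) \<le> f m"
proof -
  have "\<exists>N. \<forall>m\<ge>N. 10 * (j + 2) \<le> f m"
    using assms(1) unfolding filterlim_at_top eventually_sequentially by blast
  then have "\<forall>m\<ge>threshold j. 10 * (j + 2) \<le> f m"
    unfolding threshold_def by (rule LeastI_ex)
  then show ?thesis
    using assms(2) by blast
qed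

text \<open>The exponent exceeds \<open>|w\<^sub>s| + 2\<close>, which is what pumping needs, and \<open>threshold (s + 2)\<close>,
  so that \<open>f n \<ge> 10 (s + 4)\<close> whenever stage \<open>s + 2\<close> is the first one of length at least \<open>n\<close>.\<close>
function block :: "nat \<Rightarrow> 'a list" where
  "block 0 = []"
| "block (Suc s) = block s
     @ list_pow (b # block (fst (prod_decode s))) (Suc (threshold (s + 2) + length (block s) + 3))
     @ list_pow (a # block (fst (prod_decode s))) (threshold (s + 2) + length (block s) + 3)
     @ [a] @ block s"
  by pat_completeness auto
termination
  by (relation "measure id") (auto simp: le_imp_less_Suc fst_prod_decode_le)

definition reps :: "nat \<Rightarrow> nat" where
  "reps s = threshold (s + 2) + length (block s) + 3"

definition middle :: "nat \<Rightarrow> 'a list" where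
  "middle s = list_pow (b # block (fst (prod_decode s))) (Suc (reps s))
     @ list_pow (a # block (fst (prod_decode s))) (reps s) @ [a]"

lemma block_Suc: "block (Suc s) = block s @ middle s @ block s"
  by (simp add: middle_def reps_def)

declare block.simps(2) [simp del]

lemma length_block_Suc_ge: "length (block s) + reps s \<le> length (block (Suc s))"
  by (simp add: block_Suc middle_def)

lemma length_block_add_3_le_reps: "length (block s) + 3 \<le> reps s"
  by (simp add: reps_def)

lemma threshold_le_length_block: "threshold (s + 2) \<le> length (block (Suc s))"
  using length_block_Suc_ge[of s] by (simp add: reps_def)

lemma strict_mono_length_block: "strict_mono (\<lambda>s. length (block s))"
  unfolding strict_mono_Suc_iff
proof
  fix s
  show "length (block s) < length (block (Suc s))"
    using length_block_Suc_ge[of s] length_block_add_3_le_reps[of s] by linarith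
qed

lemma length_block_ge: "s \<le> length (block s)"
  using strict_mono_length_block by (rule strict_mono_imp_increasing)

lemma block_prefix: "s \<le> t \<Longrightarrow> \<exists>r. block t = block s @ r"
proof (induction t rule: dec_induct)
  case base
  then show ?case by simp
next
  case (step t)
  then show ?case
    by (auto simp: block_Suc)
qed

lemma set_block_subset: "set (block s) \<subseteq> {a, b}"
proof (induction s rule: less_induct)
  case (less s)
  show ?case
  proof (cases s)
    case 0
    then show ?thesis by simp
  next
    case (Suc t)
    then have "set (block (fst (prod_decode t))) \<subseteq> {a, b}" "set (block t) \<subseteq> {a, b}"
      using less fst_prod_decode_le[of t] by auto
    moreover have "set (list_pow (c # block (fst (prod_decode t))) m) \<subseteq> {a, b}"
      if "c \<in> {a, b}" for c m
      using that calculation(1) set_list_pow_subset[of "c # block (fst (prod_decode t))" m] by auto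
    ultimately show ?thesis
      unfolding Suc block_Suc middle_def set_append by (simp only: Un_subset_iff) simp
  qed
qed

lemma count_list_block:
  assumes "a \<noteq> b"
  shows "count_list (block s) a = count_list (block s) b"
proof (induction s rule: less_induct)
  case (less s)
  show ?case
  proof (cases s)
    case 0
    then show ?thesis by simp
  next
    case (Suc t)
    then have "count_list (block (fst (prod_decode t))) a = count_list (block (fst (prod_decode t))) b"
      "count_list (block t) a = count_list (block t) b"
      using less fst_prod_decode_le[of t] by auto
    then show ?thesis
      using assms unfolding Suc block_Suc middle_def by (simp add: count_list_pow algebra_simps)
  qed
qed

definition limit_word :: "nat \<Rightarrow> 'a" where
  "limit_word i = block (Suc i) ! i"

lemma limit_word_eq_nth:
  assumes "i < length (block t)"
  shows "limit_word i = block t ! i"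
proof -
  let ?m = "max t (Suc i)"
  obtain r where r: "block ?m = block t @ r"
    using block_prefix[of t ?m] by auto
  obtain r' where r': "block ?m = block (Suc i) @ r'"
    using block_prefix[of "Suc i" ?m] by auto
  have "i < length (block (Suc i))"
    using length_block_ge[of "Suc i"] by simp
  then have "block (Suc i) ! i = block ?m ! i"
    using r' by (simp add: nth_append)
  also have "\<dots> = block t ! i"
    using r assms by (simp add: nth_append)
  finally show ?thesis
    unfolding limit_word_def .
qed

lemma occurs_at_limit_word_iff:
  assumes "i + length x \<le> length (block t)"
  shows "occurs_at limit_word x i \<longleftrightarrow> x = take (length x) (drop i (block t))"
proof -
  have "map (\<lambda>k. limit_word (i + k)) [0..<length x] = take (length x) (drop i (block t))"
    using assms by (intro nth_equalityI) (auto simp: limit_word_eq_nth)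
  then show ?thesis
    unfolding occurs_at_def by simp
qed

lemma occurs_at_limit_word:
  assumes "block t = u @ x @ v"
  shows "occurs_at limit_word x (length u)"
  using occurs_at_limit_word_iff[of "length u" x t] assms by simp

lemma range_limit_word_subset: "range limit_word \<subseteq> {a, b}"
proof
  fix c assume "c \<in> range limit_word"
  then obtain i where c: "c = limit_word i"
    by auto
  have "i < length (block (Suc i))"
    using length_block_ge[of "Suc i"] by simp
  then have "c \<in> set (block (Suc i))"
    unfolding c limit_word_def by simp
  then show "c \<in> {a, b}"
    using set_block_subset by blast
qed

text \<open>At stage \<open>prod_encode (k, N)\<close> the power \<open>(b w\<^sub>k)\<^sup>R\<^sup>+\<^sup>1 = b (w\<^sub>k b)\<^sup>R w\<^sub>k\<close> with \<open>R \<ge> N\<close> occurs.\<close>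
lemma is_factor_limit_word_pow: "is_factor limit_word (list_pow (block k @ [b]) N)"
proof -
  let ?s = "prod_encode (k, N)"
  let ?y = "block k @ [b]"
  have "N \<le> reps ?s"
    using le_prod_encode_2[of N k] length_block_ge[of ?s] length_block_add_3_le_reps[of ?s] by linarith
  then have "list_pow ?y (reps ?s) = list_pow ?y N @ list_pow ?y (reps ?s - N)"
    by (metis le_add_diff_inverse list_pow_add)
  then have "block (Suc ?s) = (block ?s @ [b]) @ list_pow ?y N @ (list_pow ?y (reps ?s - N) @ block k
     @ list_pow (a # block k) (reps ?s) @ [a] @ block ?s)"
    unfolding block_Suc middle_def list_pow_Cons_Suc by simp
  then show ?thesis
    unfolding is_factor_def by (blast intro: occurs_at_limit_word)
qed

lemma primitive_block_snoc:
  assumes "a \<noteq> b"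
  shows "primitive (block k @ [b])"
  unfolding primitive_def
proof (intro conjI notI)
  show "block k @ [b] = [] \<Longrightarrow> False"
    by simp
next
  assume "\<exists>z m. 2 \<le> m \<and> block k @ [b] = concat (replicate m z)"
  then obtain z m where m: "2 \<le> m" and z: "block k @ [b] = list_pow z m"
    unfolding list_pow_def by auto
  have "count_list (list_pow z m) b = count_list (list_pow z m) a + 1"
    unfolding z[symmetric] using count_list_block[OF assms, of k] assms by simp
  then have "m * count_list z b = m * count_list z a + 1"
    by (simp add: count_list_pow)
  then have "m dvd 1"
    by (metis dvd_add_right_iff dvd_triv_left)
  then show False
    using m by simp
qed

lemma recurrent_limit_word: "recurrent limit_word"
  unfolding recurrent_def
proof (intro allI impI)
  fix x assume "is_factor limit_word x"
  then obtain i where i: "occurs_at limit_word x i"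
    unfolding is_factor_def by auto
  let ?t = "i + length x"
  have "x = take (length x) (drop i (block ?t))"
    using i occurs_at_limit_word_iff[of i x ?t] length_block_ge[of ?t] by simp
  then have "block ?t = take i (block ?t) @ x @ drop (length x) (drop i (block ?t))"
    by (metis append_take_drop_id)
  then obtain u v where uv: "block ?t = u @ x @ v"
    by blast
  show "infinite {i. occurs_at limit_word x i}"
    unfolding infinite_nat_iff_unbounded_le
  proof
    fix m
    let ?s = "max ?t m"
    obtain r where "block ?s = block ?t @ r"
      using block_prefix[of ?t ?s] by auto
    then have "block (Suc ?s) = (block ?s @ middle ?s @ u) @ x @ (v @ r)"
      unfolding block_Suc uv by simp
    then have "occurs_at limit_word x (length (block ?s @ middle ?s @ u))"
      by (rule occurs_at_limit_word)
    moreover have "m \<le> length (block ?s @ middle ?s @ u)"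
      using length_block_ge[of ?s] by simp
    ultimately show "\<exists>p\<ge>m. p \<in> {i. occurs_at limit_word x i}"
      by blast
  qed
qed

lemma factors_of_length_limit_word_subset:
  assumes "\<And>t. \<sigma> \<le> t \<Longrightarrow> list_factors n (block t) \<subseteq> S"
  shows "factors_of_length limit_word n \<subseteq> S"
proof
  fix x assume "x \<in> factors_of_length limit_word n"
  then obtain i where lx: "length x = n" and x: "occurs_at limit_word x i"
    unfolding factors_of_length_def is_factor_def by auto
  let ?t = "max \<sigma> (i + n)"
  have le: "i + length x \<le> length (block ?t)"
    using length_block_ge[of ?t] lx by simp
  then have "x = take n (drop i (block ?t))"
    using x occurs_at_limit_word_iff lx by blast
  then have "x \<in> list_factors n (block ?t)"
    using le lx unfolding list_factors_def by auto
  then show "x \<in> S"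
    using assms[of ?t] by auto
qed

text \<open>Raising a power of \<open>c w\<^sub>k\<close> beyond the exponent \<open>pump_exp n k\<close> creates no new factors of
  length \<open>n\<close>.\<close>
definition pump_exp :: "nat \<Rightarrow> nat \<Rightarrow> nat" where
  "pump_exp n k = n div (length (block k) + 1) + 2"

lemma pump_exp_length_ge: "n + length (c # block k) \<le> pump_exp n k * length (c # block k)"
  using add_le_div_add_2_mult[of "length (block k) + 1" n] by (simp add: pump_exp_def)

lemma pump_exp_length_le:
  assumes "length (block k) < n"
  shows "pump_exp n k * (length (block k) + 1) \<le> 3 * n"
  using div_add_2_mult_le[of "length (block k) + 1" n] assms by (simp add: pump_exp_def)

definition pumped_middle :: "nat \<Rightarrow> nat \<Rightarrow> 'a list" where
  "pumped_middle n s =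
     list_pow (b # block (fst (prod_decode s))) (min (Suc (reps s)) (pump_exp n (fst (prod_decode s))))
     @ list_pow (a # block (fst (prod_decode s))) (min (reps s) (pump_exp n (fst (prod_decode s))))
     @ [a]"

definition junction :: "nat \<Rightarrow> nat \<Rightarrow> 'a list" where
  "junction n k = list_pow (b # block k) (pump_exp n k) @ list_pow (a # block k) (pump_exp n k) @ [a]"

lemma list_factors_middle_subset:
  "list_factors n (U @ middle s @ V) \<subseteq> list_factors n (U @ pumped_middle n s @ V)"
proof -
  let ?k = "fst (prod_decode s)"
  let ?c = "pump_exp n ?k"
  have "list_factors n (U @ middle s @ V)
      \<subseteq> list_factors n (U @ list_pow (b # block ?k) (min (Suc (reps s)) ?c)
           @ (list_pow (a # block ?k) (reps s) @ [a] @ V))"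
    unfolding middle_def append.assoc by (rule list_factors_pow_min_subset[OF pump_exp_length_ge])
  also have "\<dots> \<subseteq> list_factors n ((U @ list_pow (b # block ?k) (min (Suc (reps s)) ?c))
           @ list_pow (a # block ?k) (min (reps s) ?c) @ ([a] @ V))"
    unfolding append.assoc[symmetric, of U]
    by (rule list_factors_pow_min_subset[OF pump_exp_length_ge])
  finally show ?thesis
    by (simp add: pumped_middle_def)
qed

lemma pumped_middle_eq_junction:
  assumes "n \<le> length (block s)"
  shows "pumped_middle n s = junction n (fst (prod_decode s))"
proof -
  have "n div (length (block (fst (prod_decode s))) + 1) \<le> n"
    by (rule div_le_dividend)
  then have "pump_exp n (fst (prod_decode s)) \<le> reps s"
    using assms length_block_add_3_le_reps[of s] unfolding pump_exp_def by linarith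
  then show ?thesis
    by (simp add: pumped_middle_def junction_def min_absorb2)
qed

lemma length_junction_le:
  assumes "length (block k) < n"
  shows "length (junction n k) \<le> 6 * n + 1"
  using pump_exp_length_le[OF assms] by (simp add: junction_def)

lemma length_pumped_middle_le:
  assumes "length (block (fst (prod_decode s))) < n"
  shows "length (pumped_middle n s) \<le> 6 * n + 1"
proof -
  have "length (pumped_middle n s) \<le> length (junction n (fst (prod_decode s)))"
    by (simp add: pumped_middle_def junction_def add_mono)
  then show ?thesis
    using length_junction_le[OF assms] by linarith
qed

text \<open>\<open>take n (block \<sigma>)\<close> and \<open>take_last n (block \<sigma>)\<close> are the common \<open>P\<close> and \<open>Q\<close> of all later blocks.\<close>
definition covering :: "nat \<Rightarrow> nat \<Rightarrow> 'a list set" where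
  "covering n \<sigma> =
     list_factors n (block \<sigma>)
     \<union> list_factors n (take_last n (block \<sigma>) @ [a] @ take n (block \<sigma>))
     \<union> list_factors n (take_last n (block \<sigma>) @ [b] @ take n (block \<sigma>))
     \<union> (\<Union>k<\<sigma>. list_factors n (take_last n (block \<sigma>) @ junction n k @ take n (block \<sigma>)))"

lemma framed_block:
  assumes "n \<le> length (block \<sigma>)" "\<sigma> \<le> t"
  shows "framed n (take n (block \<sigma>)) (take_last n (block \<sigma>)) (covering n \<sigma>) (block t)"
  using assms(2)
proof (induction t rule: less_induct)
  case (less t)
  define P Q where "P = take n (block \<sigma>)" and "Q = take_last n (block \<sigma>)"
  show ?case
  proof (cases "t = \<sigma>")
    case True
    then show ?thesis
      using assms(1) unfolding framed_def covering_def by auto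
  next
    case False
    then obtain s where t: "t = Suc s" and s: "\<sigma> \<le> s"
      using less.prems by (cases t) auto
    let ?k = "fst (prod_decode s)"
    have IH: "framed n P Q (covering n \<sigma>) (block s)"
      using less.IH s unfolding t P_def Q_def by simp
    then have ns: "n \<le> length (block s)" "take n (block s) = P" "take_last n (block s) = Q"
      "list_factors n (block s) \<subseteq> covering n \<sigma>"
      unfolding framed_def by auto
    show ?thesis
    proof (cases "\<sigma> \<le> ?k")
      case True
      then have k: "framed n P Q (covering n \<sigma>) (block ?k)"
        using less.IH fst_prod_decode_le[of s] unfolding t P_def Q_def by simp
      have junctions: "list_factors n (Q @ [a] @ P) \<subseteq> covering n \<sigma>"
        "list_factors n (Q @ [b] @ P) \<subseteq> covering n \<sigma>"
        unfolding covering_def P_def Q_def by auto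
      have "block (Suc s) = ((block s @ list_pow (b # block ?k) (Suc (reps s)))
          @ list_pow (a # block ?k) (reps s)) @ a # block s"
        by (simp add: block_Suc middle_def)
      then show ?thesis
        unfolding t P_def[symmetric] Q_def[symmetric]
        by (simp only:) (intro framed_append_Cons framed_append_pow IH k junctions)
    next
      case False
      have "list_factors n (block (Suc s))
          \<subseteq> list_factors n (block s) \<union> list_factors n (Q @ middle s @ P)"
        using list_factors_append3[of n "block s" "middle s" "block s"] ns
        unfolding block_Suc by auto
      also have "\<dots> \<subseteq> list_factors n (block s) \<union> list_factors n (Q @ junction n ?k @ P)"
        using list_factors_middle_subset[of n Q s P] pumped_middle_eq_junction[OF ns(1)] by auto
      also have "\<dots> \<subseteq> covering n \<sigma>"
        using ns(4) False unfolding covering_def P_def Q_def by auto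
      finally show ?thesis
        using ns(1-3) take_last_append[OF ns(1), of "block s @ middle s"]
        unfolding t framed_def P_def[symmetric] Q_def[symmetric] block_Suc by simp
    qed
  qed
qed

definition first_stage :: "nat \<Rightarrow> nat" where
  "first_stage n = (LEAST s. n \<le> length (block s))"

lemma length_block_first_stage: "n \<le> length (block (first_stage n))"
  unfolding first_stage_def using length_block_ge by (rule LeastI)

lemma length_block_less_first_stage: "k < first_stage n \<Longrightarrow> length (block k) < n"
  unfolding first_stage_def using not_less_Least not_le by blast

lemma card_list_factors_block_first_stage:
  assumes "first_stage n = Suc s"
  shows "card (list_factors n (block (first_stage n))) \<le> 8 * n + 2"
proof -
  have "length (block s) < n" "length (block (fst (prod_decode s))) < n"
    using length_block_less_first_stage assms fst_prod_decode_le[of s] by auto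
  then have "length (block s @ pumped_middle n s @ block s) \<le> 8 * n + 1"
    using length_pumped_middle_le[of s n] by simp
  moreover have "list_factors n (block (Suc s)) \<subseteq> list_factors n (block s @ pumped_middle n s @ block s)"
    unfolding block_Suc by (rule list_factors_middle_subset)
  then have "card (list_factors n (block (Suc s))) \<le> card (list_factors n (block s @ pumped_middle n s @ block s))"
    by (rule card_mono[OF finite_list_factors])
  ultimately show ?thesis
    using card_list_factors_le[of n "block s @ pumped_middle n s @ block s"] assms by simp
qed

lemma card_covering_le:
  assumes "first_stage n = Suc s"
  shows "card (covering n (first_stage n)) \<le> (first_stage n + 2) * (8 * n + 2)"
proof -
  let ?\<sigma> = "first_stage n"
  let ?P = "take n (block ?\<sigma>)" and ?Q = "take_last n (block ?\<sigma>)"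
  let ?J = "\<Union>k<?\<sigma>. list_factors n (?Q @ junction n k @ ?P)"
  have PQ: "length ?P = n" "length ?Q = n"
    using length_block_first_stage[of n] by (auto simp: take_last_def)
  have letter: "card (list_factors n (?Q @ [c] @ ?P)) \<le> 2 * n + 2" for c
    using card_list_factors_le[of n "?Q @ [c] @ ?P"] PQ by simp
  have "card (list_factors n (?Q @ junction n k @ ?P)) \<le> 8 * n + 2" if "k < ?\<sigma>" for k
    using card_list_factors_le[of n "?Q @ junction n k @ ?P"]
      length_junction_le[OF length_block_less_first_stage[OF that]] PQ by simp
  then have "card ?J \<le> ?\<sigma> * (8 * n + 2)"
    using card_UN_le[of "{..<?\<sigma>}" "\<lambda>k. list_factors n (?Q @ junction n k @ ?P)"]
      sum_mono[of "{..<?\<sigma>}" "\<lambda>k. card (list_factors n (?Q @ junction n k @ ?P))" "\<lambda>_. 8 * n + 2"]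
    by simp
  moreover have "card (covering n ?\<sigma>) \<le> card (list_factors n (block ?\<sigma>))
      + card (list_factors n (?Q @ [a] @ ?P)) + card (list_factors n (?Q @ [b] @ ?P)) + card ?J"
    unfolding covering_def
    using card_Un_le[of "list_factors n (block ?\<sigma>) \<union> list_factors n (?Q @ [a] @ ?P)
        \<union> list_factors n (?Q @ [b] @ ?P)" ?J]
      card_Un_le[of "list_factors n (block ?\<sigma>) \<union> list_factors n (?Q @ [a] @ ?P)"
        "list_factors n (?Q @ [b] @ ?P)"]
      card_Un_le[of "list_factors n (block ?\<sigma>)" "list_factors n (?Q @ [a] @ ?P)"]
    by linarith
  moreover have "1 \<le> n"
    using length_block_less_first_stage[of 0 n] assms by simp
  moreover have "(?\<sigma> + 2) * (8 * n + 2) = ?\<sigma> * (8 * n + 2) + 16 * n + 4"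
    by (simp add: algebra_simps)
  ultimately show ?thesis
    using card_list_factors_block_first_stage[OF assms] letter[of a] letter[of b]
    by linarith
qed

lemma complexity_limit_word_le:
  assumes "filterlim f at_top at_top" "1 \<le> n" "threshold 1 \<le> n"
  shows "complexity limit_word n \<le> n * f n"
proof -
  let ?\<sigma> = "first_stage n"
  obtain s where s: "?\<sigma> = Suc s"
    using length_block_first_stage[of n] assms(2) by (cases ?\<sigma>) auto
  have "threshold ?\<sigma> \<le> n"
  proof (cases s)
    case 0
    then show ?thesis
      using s assms(3) by simp
  next
    case (Suc r)
    then have "threshold ?\<sigma> \<le> length (block s)"
      using threshold_le_length_block[of r] s by simp
    also have "\<dots> < n"
      using length_block_less_first_stage s by simp
    finally show ?thesis
      by simp
  qed
  then have f_large: "10 * (?\<sigma> + 2) \<le> f n"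
    by (rule f_ge_of_threshold_le[OF assms(1)])
  have "factors_of_length limit_word n \<subseteq> covering n ?\<sigma>"
    using framed_block[OF length_block_first_stage] unfolding framed_def
    by (intro factors_of_length_limit_word_subset) blast
  then have "complexity limit_word n \<le> card (covering n ?\<sigma>)"
    unfolding complexity_def by (intro card_mono) (simp_all add: covering_def finite_list_factors)
  also have "\<dots> \<le> (?\<sigma> + 2) * (8 * n + 2)"
    using card_covering_le[OF s] .
  also have "\<dots> \<le> (?\<sigma> + 2) * (10 * n)"
    using assms(2) by (intro mult_le_mono2) linarith
  also have "\<dots> = n * (10 * (?\<sigma> + 2))"
    by (simp add: algebra_simps)
  also have "\<dots> \<le> n * f n"
    using f_large by (rule mult_le_mono2)
  finally show ?thesis .
qed

lemma inj_block_snoc: "inj (\<lambda>k. block k @ [c])"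
proof (rule injI)
  fix k l assume "block k @ [c] = block l @ [c]"
  then have "length (block k) = length (block l)"
    by simp
  then show "k = l"
    using strict_mono_eq[OF strict_mono_length_block] by blast
qed

end

theorem theorem3:
  fixes f :: "nat \<Rightarrow> nat" and \<Sigma> :: "'a set"
  assumes "filterlim f at_top at_top"
    and "finite \<Sigma>" and "card \<Sigma> \<ge> 2"
  shows "\<exists>w :: nat \<Rightarrow> 'a. range w \<subseteq> \<Sigma> \<and> recurrent w
           \<and> (\<forall>\<^sub>F n in sequentially. complexity w n \<le> n * f n)
           \<and> infinite {y. primitive y \<and> is_factor w y
                          \<and> (\<forall>n\<ge>1. is_factor w (concat (replicate n y)))}"
proof -
  obtain T where "T \<subseteq> \<Sigma>" "card T = 2"
    using obtain_subset_with_card_n[OF assms(3)] by blast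
  then obtain a b where ab: "a \<in> \<Sigma>" "b \<in> \<Sigma>" "a \<noteq> b"
    unfolding card_2_iff by blast
  let ?w = "limit_word f a b"
  define Y where "Y = {y. primitive y \<and> is_factor ?w y \<and> (\<forall>n\<ge>1. is_factor ?w (concat (replicate n y)))}"
  have "range (\<lambda>k. block f a b k @ [b]) \<subseteq> Y"
  proof (rule image_subsetI)
    fix k
    have "is_factor ?w (concat (replicate n (block f a b k @ [b])))" for n
      using is_factor_limit_word_pow[of f a b k n] unfolding list_pow_def .
    from this[of 1] this show "block f a b k @ [b] \<in> Y"
      unfolding Y_def using primitive_block_snoc[OF ab(3)] by simp
  qed
  then have "infinite Y"
    by (rule infinite_super[OF _ range_inj_infinite[OF inj_block_snoc]])
  show ?thesis
  proof (intro exI[of _ ?w] conjI)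
    have "{a, b} \<subseteq> \<Sigma>"
      using ab by simp
    with range_limit_word_subset show "range ?w \<subseteq> \<Sigma>"
      by (rule order_trans)
    show "recurrent ?w"
      by (rule recurrent_limit_word)
    show "\<forall>\<^sub>F n in sequentially. complexity ?w n \<le> n * f n"
      unfolding eventually_sequentially
      by (intro exI[of _ "max 1 (threshold f 1)"] allI impI complexity_limit_word_le[OF assms(1)]) simp_all
    show "infinite {y. primitive y \<and> is_factor ?w y \<and> (\<forall>n\<ge>1. is_factor ?w (concat (replicate n y)))}"
      using \<open>infinite Y\<close> unfolding Y_def .
  qed
qed

end
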